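(* Let $1<\alpha\le2$, $\delta\in(1-\frac\alpha2,1)$, and let $f(x)=a_0+a_1x+\dots+a_nx^n$ be a real polynomial. Then $F:C^\delta(0,1)\to H^{-\alpha/2}_2$, $F(u)=\frac{d}{dx}f(u(\cdot))$, is well defined, and for every $R>0$ there is $C_R>0$ such that for all $u,v\in C^\delta(0,1)$ with $|u|_{C^\delta},|v|_{C^\delta}\le R$, $$|F(u)-F(v)|_{H^{-\alpha/2}_2}\le C_R\,|u-v|_{C^\delta}.$$
   Context: Let $e_k(x)=\sqrt2\sin(k\pi x)$, $k\ge1$, be the $L^2(0,1)$-orthonormal eigenfunctions of $A=-\partial_x^2$ with Dirichlet boundary conditions on $(0,1)$, with eigenvalues $\lambda_k=(k\pi)^2$. For $\gamma\in\mathbb R$, $H^\gamma_2$ is the space of $v=\sum_k v_ke_k$ with $|v|^2_{H^\gamma_2}=\sum_k\lambda_k^\gamma v_k^2<\infty$ (for $\gamma<0$ the completion of $L^2(0,1)$ in this norm). For $\delta\in(0,1)$, $C^\delta(0,1)$ is the space of bounded continuous functions on $[0,1]$ with norm $|g|_{C^\delta}=\sup_x|g(x)|+\sup_{x\ne y}|g(x)-g(y)|/|x-y|^\delta$. For $u\in C^\delta(0,1)$, $F(u)=\partial_x(f(u))$ is the distribution with coefficients $\langle F(u),e_k\rangle:=-\int_0^1 f(u(x))e_k'(x)\,dx$. *)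

theory Defs
  imports "HOL-Analysis.Analysis" "HOL-Computational_Algebra.Polynomial"
begin

text \<open>Dirichlet eigenfunctions e_k(x) = sqrt 2 sin(k pi x), their derivatives, eigenvalues.\<close>
definition eig_fun :: "nat \<Rightarrow> real \<Rightarrow> real" where
  "eig_fun k x = sqrt 2 * sin (real k * pi * x)"

definition eig_fun_deriv :: "nat \<Rightarrow> real \<Rightarrow> real" where
  "eig_fun_deriv k x = sqrt 2 * (real k * pi) * cos (real k * pi * x)"

definition eig_val :: "nat \<Rightarrow> real" where
  "eig_val k = (real k * pi)^2"

definition holder_quots :: "real \<Rightarrow> (real \<Rightarrow> real) \<Rightarrow> real set" where
  "holder_quots \<delta> g = {\<bar>g x - g y\<bar> / \<bar>x - y\<bar> powr \<delta> | x y. x \<in> {0..1} \<and> y \<in> {0..1} \<and> x \<noteq> y}"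

definition holder_space :: "real \<Rightarrow> (real \<Rightarrow> real) set" where
  "holder_space \<delta> = {g. continuous_on {0..1} g \<and> bdd_above (holder_quots \<delta> g)}"

definition holder_norm :: "real \<Rightarrow> (real \<Rightarrow> real) \<Rightarrow> real" where
  "holder_norm \<delta> g = (SUP x\<in>{0..1}. \<bar>g x\<bar>) + Sup (holder_quots \<delta> g)"

text \<open>Coefficients <F(u), e_k> = - int_0^1 f(u(x)) e_k'(x) dx, with f given by a real polynomial.\<close>
definition F_coef :: "real poly \<Rightarrow> (real \<Rightarrow> real) \<Rightarrow> nat \<Rightarrow> real" where
  "F_coef p u k = - integral {0..1} (\<lambda>x. poly p (u x) * eig_fun_deriv k x)"

text \<open>Squared H^gamma_2 norm series of a coefficient sequence c (indices k >= 1).\<close>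
definition H_terms :: "real \<Rightarrow> (nat \<Rightarrow> real) \<Rightarrow> nat \<Rightarrow> real" where
  "H_terms \<gamma> c k = eig_val (Suc k) powr \<gamma> * (c (Suc k))^2"

definition H_norm :: "real \<Rightarrow> (nat \<Rightarrow> real) \<Rightarrow> real" where
  "H_norm \<gamma> c = sqrt (\<Sum>k. H_terms \<gamma> c k)"

end

theory Submission
  imports Defs
begin

text \<open>
  Since \<open>e_k' = sqrt 2 k pi cos (k pi x)\<close>, the coefficients of \<open>F(u) = (f \<circ> u)'\<close> are
  \<open>-sqrt 2 k pi\<close> times the cosine coefficients \<open>c_k\<close> of \<open>f \<circ> u\<close>, and the \<open>H^(-alpha/2)\<close> norm
  of \<open>F(u)\<close> is a weighted sum of \<open>k^(2 - alpha) c_k^2\<close>. For a function \<open>g\<close> that is \<open>delta\<close>-Hoelder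
  with constant \<open>L\<close>, a Bernstein-type argument gives \<open>sum_{N <= k < 2N} c_k^2 <= L^2/2 (2N)^(-2 delta)\<close>:
  the symmetric second difference \<open>g(x) - (g(x + h) + g(x - h))/2\<close> of the even periodic
  extension, with \<open>h = 1/(2N)\<close>, has coefficients \<open>(1 - cos (k pi h)) c_k\<close>, which dominate \<open>c_k\<close>
  on the block, and it is bounded by \<open>L h^delta\<close>, so Bessel's inequality applies. As
  \<open>2 - alpha < 2 delta\<close>, the dyadic blocks sum to a geometric series, and \<open>|F(u)|\<close> is
  bounded by a constant times \<open>L\<close>. For the Lipschitz estimate one applies this to
  \<open>f \<circ> u - f \<circ> v\<close>, whose Hoelder constant is controlled by \<open>|u - v|_{C^delta}\<close> through the
  second-difference inequality
  \<open>|f a - f b - (f a' - f b')| <= M |(a - b) - (a' - b')| + K |a' - b'| |b - b'|\<close>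
  for \<open>f\<close> with derivative bounded by \<open>M\<close> and \<open>K\<close>-Lipschitz.
\<close>

section \<open>Cosine coefficients and Bessel's inequality\<close>

definition cos_mode :: "nat \<Rightarrow> real \<Rightarrow> real" where
  "cos_mode k x = cos (real k * pi * x)"

definition cos_coeff :: "(real \<Rightarrow> real) \<Rightarrow> nat \<Rightarrow> real" where
  "cos_coeff g k = integral {0..1} (\<lambda>x. g x * cos_mode k x)"

lemma continuous_on_cos_mode [continuous_intros]:
  fixes f :: "real \<Rightarrow> real"
  assumes "continuous_on S f"
  shows "continuous_on S (\<lambda>x. cos_mode k (f x))"
  unfolding cos_mode_def by (intro continuous_intros assms)

lemma cos_mode_minus: "cos_mode k (- x) = cos_mode k x"
  by (simp add: cos_mode_def)

lemma cos_mode_two_minus: "cos_mode k (2 - x) = cos_mode k x"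
proof -
  have "cos_mode k (2 - x) = cos (2 * pi * real k - real k * pi * x)"
    by (simp add: cos_mode_def algebra_simps)
  also have "\<dots> = cos (real k * pi * x)"
    using cos_2npi[of k] sin_2npi[of k] by (simp add: cos_diff mult.commute mult.left_commute)
  finally show ?thesis by (simp add: cos_mode_def)
qed

lemma has_integral_cos_int_multiple:
  fixes m :: int
  assumes "m \<noteq> 0"
  shows "((\<lambda>x. cos (of_int m * pi * x)) has_integral 0) {0..1}"
proof -
  have "((\<lambda>x. sin (of_int m * pi * x) / (of_int m * pi)) has_real_derivative cos (of_int m * pi * x))
      (at x within {0..1})" for x
    using assms by (auto intro!: derivative_eq_intros)
  then have "((\<lambda>x. cos (of_int m * pi * x)) has_integral
      (sin (of_int m * pi * 1) / (of_int m * pi) - sin (of_int m * pi * 0) / (of_int m * pi))) {0..1}"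
    by (intro fundamental_theorem_of_calculus) (auto simp: has_real_derivative_iff_has_vector_derivative)
  moreover have "sin (of_int m * pi) = 0"
    by (simp add: sin_zero_iff_int2)
  ultimately show ?thesis
    by simp
qed

lemma cos_mode_orthogonal:
  assumes "j \<ge> 1" "k \<ge> 1"
  shows "((\<lambda>x. cos_mode j x * cos_mode k x) has_integral (if j = k then 1/2 else 0)) {0..1}"
proof -
  have prod: "cos_mode j x * cos_mode k x
      = cos (of_int (int j - int k) * pi * x) / 2 + cos (of_int (int j + int k) * pi * x) / 2" for x
    unfolding cos_mode_def by (simp add: cos_times_cos algebra_simps)
  have sum_freq: "((\<lambda>x. cos (of_int (int j + int k) * pi * x) / 2) has_integral 0) {0..1}"
    using has_integral_divide[OF has_integral_cos_int_multiple[of "int j + int k"], of 2] assms by simp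
  have diff_freq: "((\<lambda>x. cos (of_int (int j - int k) * pi * x) / 2) has_integral
      (if j = k then 1/2 else 0)) {0..1}"
  proof (cases "j = k")
    case True
    then show ?thesis using has_integral_const_real[of "1/2::real" 0 1] by simp
  next
    case False
    then show ?thesis
      using has_integral_divide[OF has_integral_cos_int_multiple[of "int j - int k"], of 2] by simp
  qed
  show ?thesis
    unfolding prod using has_integral_add[OF diff_freq sum_freq] by simp
qed

lemma bessel_cos_modes:
  assumes S: "finite S" "\<And>k. k \<in> S \<Longrightarrow> k \<ge> 1"
    and r: "continuous_on {0..1} r"
  shows "2 * (\<Sum>k\<in>S. (cos_coeff r k)^2) \<le> integral {0..1} (\<lambda>x. (r x)^2)"
proof -
  define a where "a = cos_coeff r"
  define s where "s x = (\<Sum>k\<in>S. a k * cos_mode k x)" for x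
  have cs: "continuous_on {0..1} s"
    unfolding s_def by (intro continuous_intros)
  note int = integrable_continuous_interval[where 'b=real]
  have inner: "integral {0..1} (\<lambda>x. r x * s x) = (\<Sum>k\<in>S. (a k)^2)"
  proof -
    have "integral {0..1} (\<lambda>x. r x * s x) = integral {0..1} (\<lambda>x. \<Sum>k\<in>S. a k * (r x * cos_mode k x))"
      unfolding s_def by (simp add: sum_distrib_left algebra_simps)
    also have "\<dots> = (\<Sum>k\<in>S. integral {0..1} (\<lambda>x. a k * (r x * cos_mode k x)))"
      by (rule integral_sum) (auto intro!: int continuous_intros r S(1))
    finally show ?thesis
      by (simp add: a_def cos_coeff_def power2_eq_square)
  qed
  have norm_sq: "integral {0..1} (\<lambda>x. (s x)^2) = (\<Sum>k\<in>S. (a k)^2) / 2"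
  proof -
    have "integral {0..1} (\<lambda>x. (s x)^2)
        = integral {0..1} (\<lambda>x. \<Sum>j\<in>S. \<Sum>k\<in>S. a j * a k * (cos_mode j x * cos_mode k x))"
      unfolding s_def power2_eq_square sum_product by (simp add: algebra_simps)
    also have "\<dots> = (\<Sum>j\<in>S. integral {0..1} (\<lambda>x. \<Sum>k\<in>S. a j * a k * (cos_mode j x * cos_mode k x)))"
      by (rule integral_sum) (auto intro!: int continuous_intros S(1))
    also have "\<dots> = (\<Sum>j\<in>S. \<Sum>k\<in>S. integral {0..1} (\<lambda>x. a j * a k * (cos_mode j x * cos_mode k x)))"
      by (intro sum.cong refl integral_sum) (auto intro!: int continuous_intros S(1))
    also have "\<dots> = (\<Sum>j\<in>S. \<Sum>k\<in>S. a j * a k * (if j = k then 1/2 else 0))"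
      using cos_mode_orthogonal S(2) by (intro sum.cong refl) (simp add: integral_unique)
    also have "\<dots> = (\<Sum>j\<in>S. (a j)^2 / 2)"
      by (intro sum.cong refl) (simp add: if_distrib S(1) power2_eq_square cong: if_cong)
    finally show ?thesis
      by (simp add: sum_divide_distrib)
  qed
  have expand: "integral {0..1} (\<lambda>x. (r x - 2 * s x)^2)
      = integral {0..1} (\<lambda>x. (r x)^2) - 4 * integral {0..1} (\<lambda>x. r x * s x)
        + 4 * integral {0..1} (\<lambda>x. (s x)^2)"
  proof -
    have "(\<lambda>x. (r x - 2 * s x)^2) = (\<lambda>x. ((r x)^2 - 4 * (r x * s x)) + 4 * (s x)^2)"
      by (auto simp: power2_eq_square algebra_simps)
    then show ?thesis
      by (simp add: integral_add integral_diff int continuous_intros r cs)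
  qed
  have "0 \<le> integral {0..1} (\<lambda>x. (r x - 2 * s x)^2)"
    by (rule integral_nonneg) (auto intro!: int continuous_intros r cs)
  then show ?thesis
    unfolding expand inner norm_sq by (simp add: a_def)
qed

section \<open>Cosine coefficients of Hoelder functions on dyadic blocks\<close>

text \<open>For \<open>g\<close> on \<open>[0,1]\<close>, \<open>g \<circ> fold_unit\<close> agrees on \<open>[-1,2]\<close> with the even 2-periodic extension
  of \<open>g\<close>, whose cosine coefficients are those of \<open>g\<close>.\<close>
definition fold_unit :: "real \<Rightarrow> real" where
  "fold_unit x = 1 - \<bar>1 - \<bar>x\<bar>\<bar>"

lemma fold_unit_id: "x \<in> {0..1} \<Longrightarrow> fold_unit x = x"
  by (auto simp: fold_unit_def)

lemma fold_unit_in_unit: "x \<in> {-1..2} \<Longrightarrow> fold_unit x \<in> {0..1}"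
  by (auto simp: fold_unit_def)

lemma fold_unit_lipschitz: "\<bar>fold_unit x - fold_unit y\<bar> \<le> \<bar>x - y\<bar>"
  by (auto simp: fold_unit_def)

lemma continuous_on_fold_unit_comp:
  assumes "continuous_on {0..1} g" "S \<subseteq> {-1..2}"
  shows "continuous_on S (\<lambda>x. g (fold_unit x))"
proof -
  have "continuous_on S fold_unit"
    unfolding fold_unit_def by (intro continuous_intros)
  then show ?thesis
    using continuous_on_compose2[OF assms(1)] assms(2) fold_unit_in_unit by blast
qed

lemma continuous_on_fold_unit_shift:
  assumes g: "continuous_on {0..1} g" and s: "\<bar>s\<bar> \<le> 1"
  shows "continuous_on {0..1} (\<lambda>x. g (fold_unit (x + s)))"
  using s by (intro continuous_on_compose2[OF continuous_on_fold_unit_comp[OF g order.refl]]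
      continuous_intros) auto

lemma integral_translate_real_ivl:
  "integral {a..b} (\<lambda>x. f (x + c)) = integral {a + c..b + c} (f :: real \<Rightarrow> real)"
  using integral_shift_real_ivl[of "a + c" c "b + c" f] by simp

lemma integral_reflect_real_ivl:
  "integral {a..b} (\<lambda>x. f (c - x)) = integral {c - b..c - a} (f :: real \<Rightarrow> real)"
  using integral_translate_real_ivl[of a b "\<lambda>t. f (- t)" "- c"]
    Henstock_Kurzweil_Integration.integral_reflect_real[of "c - a" "c - b" f]
  by simp

lemma integral_fold_unit_shift_right:
  assumes g: "continuous_on {0..1} g" and h: "0 \<le> h" "h \<le> 1"
  shows "integral {0..1} (\<lambda>x. g (fold_unit (x + h)) * cos_mode k x)
       = integral {h..1} (\<lambda>y. g y * cos_mode k (y - h))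
       + integral {1 - h..1} (\<lambda>y. g y * cos_mode k (y + h))"
proof -
  define G where "G y = g (fold_unit y) * cos_mode k (y - h)" for y
  have "continuous_on {h..1 + h} G"
    unfolding G_def using h by (intro continuous_intros continuous_on_fold_unit_comp g) auto
  then have split: "integral {h..1 + h} G = integral {h..1} G + integral {1..1 + h} G"
    using h by (intro Henstock_Kurzweil_Integration.integral_combine[symmetric] integrable_continuous_interval) auto
  have left: "integral {h..1} G = integral {h..1} (\<lambda>y. g y * cos_mode k (y - h))"
    by (rule integral_cong) (use h in \<open>auto simp: G_def fold_unit_id\<close>)
  have "integral {1 - h..1} (\<lambda>y. g y * cos_mode k (y + h)) = integral {1 - h..1} (\<lambda>y. G (2 - y))"
  proof (rule integral_cong)
    fix y assume y: "y \<in> {1 - h..1}"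
    then have "fold_unit (2 - y) = y"
      using h by (auto simp: fold_unit_def)
    moreover have "cos_mode k (2 - y - h) = cos_mode k (y + h)"
      using cos_mode_two_minus[of k "y + h"] by (simp add: algebra_simps)
    ultimately show "g y * cos_mode k (y + h) = G (2 - y)"
      by (simp add: G_def)
  qed
  also have "\<dots> = integral {1..1 + h} G"
    using integral_reflect_real_ivl[of "1 - h" 1 G 2] by simp
  finally have right: "integral {1..1 + h} G = integral {1 - h..1} (\<lambda>y. g y * cos_mode k (y + h))" ..
  have "integral {0..1} (\<lambda>x. g (fold_unit (x + h)) * cos_mode k x) = integral {h..1 + h} G"
    using integral_translate_real_ivl[of 0 1 G h] by (simp add: G_def)
  then show ?thesis
    unfolding split left right .
qed

lemma integral_fold_unit_shift_left:
  assumes g: "continuous_on {0..1} g" and h: "0 \<le> h" "h \<le> 1"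
  shows "integral {0..1} (\<lambda>x. g (fold_unit (x - h)) * cos_mode k x)
       = integral {0..h} (\<lambda>y. g y * cos_mode k (y - h))
       + integral {0..1 - h} (\<lambda>y. g y * cos_mode k (y + h))"
proof -
  define G where "G y = g (fold_unit y) * cos_mode k (y + h)" for y
  have "continuous_on {-h..1 - h} G"
    unfolding G_def using h by (intro continuous_intros continuous_on_fold_unit_comp g) auto
  then have split: "integral {-h..1 - h} G = integral {-h..0} G + integral {0..1 - h} G"
    using h by (intro Henstock_Kurzweil_Integration.integral_combine[symmetric] integrable_continuous_interval) auto
  have right: "integral {0..1 - h} G = integral {0..1 - h} (\<lambda>y. g y * cos_mode k (y + h))"
    by (rule integral_cong) (use h in \<open>auto simp: G_def fold_unit_id\<close>)
  have "integral {0..h} (\<lambda>y. g y * cos_mode k (y - h)) = integral {0..h} (\<lambda>y. G (0 - y))"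
  proof (rule integral_cong)
    fix y assume y: "y \<in> {0..h}"
    then have "fold_unit (0 - y) = y"
      using h by (auto simp: fold_unit_def)
    moreover have "cos_mode k (0 - y + h) = cos_mode k (y - h)"
      using cos_mode_minus[of k "y - h"] by (simp add: algebra_simps)
    ultimately show "g y * cos_mode k (y - h) = G (0 - y)"
      by (simp add: G_def)
  qed
  also have "\<dots> = integral {-h..0} G"
    using integral_reflect_real_ivl[of 0 h G 0] by simp
  finally have left: "integral {-h..0} G = integral {0..h} (\<lambda>y. g y * cos_mode k (y - h))" ..
  have "integral {0..1} (\<lambda>x. g (fold_unit (x - h)) * cos_mode k x) = integral {-h..1 - h} G"
    using integral_translate_real_ivl[of 0 1 G "-h"] by (simp add: G_def)
  then show ?thesis
    unfolding split left right by simp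
qed

lemma cos_coeff_fold_unit_shifts:
  assumes g: "continuous_on {0..1} g" and h: "0 \<le> h" "h \<le> 1"
  shows "integral {0..1} (\<lambda>x. g (fold_unit (x + h)) * cos_mode k x)
       + integral {0..1} (\<lambda>x. g (fold_unit (x - h)) * cos_mode k x)
       = 2 * cos (real k * pi * h) * cos_coeff g k"
proof -
  let ?minus = "\<lambda>y. g y * cos_mode k (y - h)" and ?plus = "\<lambda>y. g y * cos_mode k (y + h)"
  have int: "?minus integrable_on {0..1}" "?plus integrable_on {0..1}"
    by (auto intro!: integrable_continuous_interval continuous_intros g)
  have "integral {0..h} ?minus + integral {h..1} ?minus = integral {0..1} ?minus"
    using h int by (intro Henstock_Kurzweil_Integration.integral_combine) auto
  moreover have "integral {0..1 - h} ?plus + integral {1 - h..1} ?plus = integral {0..1} ?plus"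
    using h int by (intro Henstock_Kurzweil_Integration.integral_combine) auto
  moreover have "integral {0..1} ?minus + integral {0..1} ?plus
      = integral {0..1} (\<lambda>y. 2 * cos (real k * pi * h) * (g y * cos_mode k y))"
    by (subst integral_add[OF int, symmetric])
      (simp add: cos_mode_def algebra_simps cos_diff cos_add)
  ultimately show ?thesis
    unfolding integral_fold_unit_shift_right[OF assms] integral_fold_unit_shift_left[OF assms]
    by (simp add: cos_coeff_def)
qed

definition sym_second_diff :: "real \<Rightarrow> (real \<Rightarrow> real) \<Rightarrow> real \<Rightarrow> real" where
  "sym_second_diff h g x = g x - (g (fold_unit (x + h)) + g (fold_unit (x - h))) / 2"

lemma continuous_on_sym_second_diff:
  assumes g: "continuous_on {0..1} g" and h: "0 \<le> h" "h \<le> 1"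
  shows "continuous_on {0..1} (sym_second_diff h g)"
  using continuous_on_fold_unit_shift[OF g, of h] continuous_on_fold_unit_shift[OF g, of "-h"] h
  unfolding sym_second_diff_def by (intro continuous_intros g) auto

lemma cos_coeff_sym_second_diff:
  assumes g: "continuous_on {0..1} g" and h: "0 \<le> h" "h \<le> 1"
  shows "cos_coeff (sym_second_diff h g) k = (1 - cos (real k * pi * h)) * cos_coeff g k"
proof -
  have "cos_coeff (sym_second_diff h g) k = cos_coeff g k
      - (integral {0..1} (\<lambda>x. g (fold_unit (x + h)) * cos_mode k x)
         + integral {0..1} (\<lambda>x. g (fold_unit (x + - h)) * cos_mode k x)) / 2"
    unfolding cos_coeff_def sym_second_diff_def left_diff_distrib add_divide_distrib
      distrib_right divide_mult_eq[symmetric]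
    using h continuous_on_fold_unit_shift[OF g, of h] continuous_on_fold_unit_shift[OF g, of "-h"]
    by (simp add: integral_diff integral_add integral_divide integrable_continuous_interval
        continuous_intros g del: minus_add_distrib)
  then show ?thesis
    using cos_coeff_fold_unit_shifts[OF assms, of k] by (simp add: algebra_simps)
qed

definition holder_on :: "real \<Rightarrow> real \<Rightarrow> (real \<Rightarrow> real) \<Rightarrow> bool" where
  "holder_on \<delta> L g \<longleftrightarrow> (\<forall>x\<in>{0..1}. \<forall>y\<in>{0..1}. \<bar>g x - g y\<bar> \<le> L * \<bar>x - y\<bar> powr \<delta>)"

lemma abs_sym_second_diff_le:
  assumes hol: "holder_on \<delta> L g" and L: "0 \<le> L" and \<delta>: "0 < \<delta>"
    and h: "0 \<le> h" "h \<le> 1" and x: "x \<in> {0..1}"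
  shows "\<bar>sym_second_diff h g x\<bar> \<le> L * h powr \<delta>"
proof -
  have shift: "\<bar>g x - g (fold_unit (x + s))\<bar> \<le> L * h powr \<delta>" if "\<bar>s\<bar> \<le> h" for s
  proof -
    have "fold_unit (x + s) \<in> {0..1}"
      using x that h by (intro fold_unit_in_unit) auto
    then have "\<bar>g x - g (fold_unit (x + s))\<bar> \<le> L * \<bar>x - fold_unit (x + s)\<bar> powr \<delta>"
      using hol x by (auto simp: holder_on_def)
    also have "\<dots> \<le> L * h powr \<delta>"
      using fold_unit_lipschitz[of x "x + s"] fold_unit_id[OF x] that \<delta>
      by (intro mult_left_mono powr_mono2 L) auto
    finally show ?thesis .
  qed
  have "sym_second_diff h g x = ((g x - g (fold_unit (x + h))) + (g x - g (fold_unit (x + - h)))) / 2"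
    by (simp add: sym_second_diff_def field_simps)
  then show ?thesis
    using shift[of h] shift[of "-h"] h by simp
qed

lemma cos_coeff_dyadic_block_le:
  assumes g: "continuous_on {0..1} g" and hol: "holder_on \<delta> L g"
    and L: "0 \<le> L" and \<delta>: "0 < \<delta>" and N: "N \<ge> 1"
  shows "(\<Sum>k\<in>{N..<2*N}. (cos_coeff g k)^2) \<le> L^2 / 2 * (2 * real N) powr (- 2 * \<delta>)"
proof -
  define h where "h = 1 / (2 * real N)"
  have h: "0 < h" "h \<le> 1"
    using N by (auto simp: h_def field_simps)
  define r where "r = sym_second_diff h g"
  have r: "continuous_on {0..1} r"
    unfolding r_def using g h by (intro continuous_on_sym_second_diff) auto
  have "integral {0..1} (\<lambda>x. (r x)^2) \<le> integral {0..1} (\<lambda>x::real. (L * h powr \<delta>)^2)"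
  proof (rule Henstock_Kurzweil_Integration.integral_le)
    fix x :: real assume "x \<in> {0..1}"
    then have "\<bar>r x\<bar> \<le> L * h powr \<delta>"
      unfolding r_def using abs_sym_second_diff_le[OF hol L \<delta>] h by simp
    then show "(r x)^2 \<le> (L * h powr \<delta>)^2"
      using power_mono[of "\<bar>r x\<bar>" _ 2] by simp
  qed (auto intro!: integrable_continuous_interval continuous_intros r)
  then have energy: "2 * (\<Sum>k\<in>{N..<2*N}. (cos_coeff r k)^2) \<le> (L * h powr \<delta>)^2"
    using bessel_cos_modes[OF _ _ r, of "{N..<2*N}"] N by simp
  have "(cos_coeff g k)^2 \<le> (cos_coeff r k)^2" if k: "k \<in> {N..<2*N}" for k
  proof -
    have "pi / 2 \<le> real k * pi * h" "real k * pi * h \<le> pi"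
      using k N by (auto simp: h_def field_simps)
    then have "cos (real k * pi * h) \<le> 0"
      using cos_monotone_0_pi_le[of "pi / 2" "real k * pi * h"] by simp
    then have "\<bar>cos_coeff g k\<bar> \<le> \<bar>cos_coeff r k\<bar>"
      unfolding r_def cos_coeff_sym_second_diff[OF g less_imp_le[OF h(1)] h(2)] abs_mult
      by (intro mult_le_cancel_right1[THEN iffD2]) auto
    then show ?thesis
      by (simp add: abs_le_square_iff)
  qed
  then have "(\<Sum>k\<in>{N..<2*N}. (cos_coeff g k)^2) \<le> (\<Sum>k\<in>{N..<2*N}. (cos_coeff r k)^2)"
    by (rule sum_mono)
  moreover have "(L * h powr \<delta>)^2 = L^2 * (2 * real N) powr (- 2 * \<delta>)"
    using N by (simp add: h_def power_mult_distrib powr_minus_divide powr_divide power_divide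
        powr_power mult.commute)
  ultimately show ?thesis
    using energy by simp
qed

lemma sum_dyadic_blocks:
  fixes t :: "nat \<Rightarrow> real"
  shows "(\<Sum>k\<in>{1..<2^J}. t k) = (\<Sum>j<J. \<Sum>k\<in>{2^j..<2*2^j}. t k)"
proof (induction J)
  case (Suc J)
  have "(\<Sum>k\<in>{1..<2^Suc J}. t k) = (\<Sum>k\<in>{1..<2^J}. t k) + (\<Sum>k\<in>{2^J..<2*2^J}. t k)"
    using sum.atLeastLessThan_concat[of 1 "2^J" "2*2^J" t] by simp
  with Suc show ?case
    by simp
qed simp

lemma weighted_cos_coeff_dyadic_block_le:
  assumes g: "continuous_on {0..1} g" and hol: "holder_on \<delta> L g"
    and L: "0 \<le> L" and \<delta>: "0 < \<delta>" and s: "0 \<le> s"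
  shows "(\<Sum>k\<in>{2^j..<2*2^j}. (real k * pi) powr s * (cos_coeff g k)^2)
      \<le> L^2 / 2 * pi powr s * (2 powr (s - 2 * \<delta>)) ^ Suc j"
proof -
  define N :: nat where "N = 2^j"
  have N: "N \<ge> 1" and N2: "2 * real N = 2 ^ Suc j"
    by (simp_all add: N_def)
  have rescale: "(X * pi) powr s * (L^2 / 2 * X powr (- 2 * \<delta>)) = L^2 / 2 * pi powr s * X powr (s - 2 * \<delta>)"
    for X :: real
    using powr_add[of X s "- 2 * \<delta>"] by (simp add: powr_mult)
  have "(\<Sum>k\<in>{N..<2*N}. (real k * pi) powr s * (cos_coeff g k)^2)
      \<le> (\<Sum>k\<in>{N..<2*N}. (2 * real N * pi) powr s * (cos_coeff g k)^2)"
    using s by (intro sum_mono mult_right_mono powr_mono2) auto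
  also have "\<dots> = (2 * real N * pi) powr s * (\<Sum>k\<in>{N..<2*N}. (cos_coeff g k)^2)"
    by (simp add: sum_distrib_left)
  also have "\<dots> \<le> (2 * real N * pi) powr s * (L^2 / 2 * (2 * real N) powr (- 2 * \<delta>))"
    by (intro mult_left_mono cos_coeff_dyadic_block_le[OF g hol L \<delta> N]) auto
  also have "\<dots> = L^2 / 2 * pi powr s * (2 * real N) powr (s - 2 * \<delta>)"
    by (rule rescale)
  also have "(2 * real N) powr (s - 2 * \<delta>) = (2 powr (s - 2 * \<delta>)) ^ Suc j"
    unfolding N2 by (simp add: powr_realpow[symmetric] powr_powr powr_mult mult.commute)
  finally show ?thesis
    by (simp add: N_def)
qed

lemma weighted_cos_coeff_summable:
  assumes g: "continuous_on {0..1} g" and hol: "holder_on \<delta> L g"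
    and L: "0 \<le> L" and \<delta>: "0 < \<delta>" and s: "0 \<le> s" "s < 2 * \<delta>"
  shows "summable (\<lambda>k. (real (Suc k) * pi) powr s * (cos_coeff g (Suc k))^2)"
    and "(\<Sum>k. (real (Suc k) * pi) powr s * (cos_coeff g (Suc k))^2)
         \<le> L^2 / 2 * pi powr s / (1 - 2 powr (s - 2 * \<delta>))"
proof -
  define q :: real where "q = 2 powr (s - 2 * \<delta>)"
  have q: "0 < q" "q < 1"
    using s powr_less_mono[of "s - 2 * \<delta>" 0 "2::real"] by (auto simp: q_def)
  define t where "t k = (real k * pi) powr s * (cos_coeff g k)^2" for k
  define B where "B = L^2 / 2 * pi powr s / (1 - q)"
  have block: "(\<Sum>k\<in>{2^j..<2*2^j}. t k) \<le> L^2 / 2 * pi powr s * q ^ j" for j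
  proof -
    have "(\<Sum>k\<in>{2^j..<2*2^j}. t k) \<le> L^2 / 2 * pi powr s * q ^ Suc j"
      unfolding t_def q_def by (rule weighted_cos_coeff_dyadic_block_le[OF g hol L \<delta> s(1)])
    also have "\<dots> \<le> L^2 / 2 * pi powr s * q ^ j"
      using q by (intro mult_left_mono power_decreasing) auto
    finally show ?thesis .
  qed
  have dyadic: "(\<Sum>k\<in>{1..<2^J}. t k) \<le> B" for J
  proof -
    have "(\<Sum>k\<in>{1..<2^J}. t k) \<le> (\<Sum>j<J. L^2 / 2 * pi powr s * q ^ j)"
      unfolding sum_dyadic_blocks by (intro sum_mono block)
    also have "\<dots> = L^2 / 2 * pi powr s * ((1 - q ^ J) / (1 - q))"
      unfolding sum_distrib_left[symmetric] sum_gp_strict using q by simp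
    also have "\<dots> \<le> L^2 / 2 * pi powr s * (1 / (1 - q))"
      using q by (intro mult_left_mono divide_right_mono) auto
    also have "\<dots> = B"
      by (simp add: B_def)
    finally show ?thesis .
  qed
  have partial: "(\<Sum>i<n. t (Suc i)) \<le> B" for n
  proof -
    have "(\<Sum>i<n. t (Suc i)) = (\<Sum>k\<in>{Suc 0..<Suc n}. t k)"
      by (subst sum.shift_bounds_Suc_ivl) (simp add: lessThan_atLeast0)
    also have "\<dots> \<le> (\<Sum>k\<in>{1..<2^n}. t k)"
      using less_exp[of n] by (intro sum_mono2) (auto simp: t_def Suc_le_eq)
    also have "\<dots> \<le> B"
      by (rule dyadic)
    finally show ?thesis .
  qed
  have nonneg: "0 \<le> t k" for k
    by (simp add: t_def)
  show sm: "summable (\<lambda>k. (real (Suc k) * pi) powr s * (cos_coeff g (Suc k))^2)"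
    using summableI_nonneg_bounded[of "\<lambda>i. t (Suc i)" B] nonneg partial by (simp add: t_def)
  show "(\<Sum>k. (real (Suc k) * pi) powr s * (cos_coeff g (Suc k))^2)
      \<le> L^2 / 2 * pi powr s / (1 - 2 powr (s - 2 * \<delta>))"
    using suminf_le_const[OF sm, of B] partial by (simp add: t_def B_def q_def)
qed

lemma holder_space_seminorm:
  assumes g: "g \<in> holder_space \<delta>"
  shows "0 \<le> Sup (holder_quots \<delta> g)" and "holder_on \<delta> (Sup (holder_quots \<delta> g)) g"
proof -
  have quot: "\<bar>g x - g y\<bar> / \<bar>x - y\<bar> powr \<delta> \<le> Sup (holder_quots \<delta> g)"
    if "x \<in> {0..1}" "y \<in> {0..1}" "x \<noteq> y" for x y
    using g that by (intro cSup_upper) (auto simp: holder_space_def holder_quots_def)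
  have "\<bar>g 0 - g 1\<bar> / \<bar>0 - 1\<bar> powr \<delta> \<le> Sup (holder_quots \<delta> g)"
    by (rule quot) auto
  then show nonneg: "0 \<le> Sup (holder_quots \<delta> g)"
    by (rule order_trans[rotated]) simp
  show "holder_on \<delta> (Sup (holder_quots \<delta> g)) g"
    unfolding holder_on_def
  proof (intro ballI)
    fix x y :: real assume xy: "x \<in> {0..1}" "y \<in> {0..1}"
    show "\<bar>g x - g y\<bar> \<le> Sup (holder_quots \<delta> g) * \<bar>x - y\<bar> powr \<delta>"
    proof (cases "x = y")
      case False
      then show ?thesis
        using quot[OF xy False] by (simp add: divide_le_eq)
    qed (simp add: nonneg)
  qed
qed

lemma abs_le_holder_sup:
  assumes "g \<in> holder_space \<delta>" "x \<in> {0..1}"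
  shows "\<bar>g x\<bar> \<le> (SUP y\<in>{0..1}. \<bar>g y\<bar>)"
proof -
  have "compact ((\<lambda>y. \<bar>g y\<bar>) ` {0..1})"
    using assms(1) by (intro compact_continuous_image continuous_intros) (auto simp: holder_space_def)
  then show ?thesis
    using assms(2) by (intro cSUP_upper bounded_imp_bdd_above compact_imp_bounded)
qed

lemma holder_norm_nonneg: "g \<in> holder_space \<delta> \<Longrightarrow> 0 \<le> holder_norm \<delta> g"
  using order_trans[OF abs_ge_zero abs_le_holder_sup[of g \<delta> 0]] holder_space_seminorm(1)[of g \<delta>]
  by (simp add: holder_norm_def)

lemma abs_le_holder_norm: "g \<in> holder_space \<delta> \<Longrightarrow> x \<in> {0..1} \<Longrightarrow> \<bar>g x\<bar> \<le> holder_norm \<delta> g"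
  using abs_le_holder_sup[of g \<delta> x] holder_space_seminorm(1)[of g \<delta>]
  by (simp add: holder_norm_def)

lemma holder_on_mono:
  assumes "holder_on \<delta> L g" "L \<le> L'"
  shows "holder_on \<delta> L' g"
  unfolding holder_on_def
proof (intro ballI)
  fix x y :: real assume "x \<in> {0..1}" "y \<in> {0..1}"
  then have "\<bar>g x - g y\<bar> \<le> L * \<bar>x - y\<bar> powr \<delta>"
    using assms(1) by (simp add: holder_on_def)
  also have "\<dots> \<le> L' * \<bar>x - y\<bar> powr \<delta>"
    using assms(2) by (intro mult_right_mono) auto
  finally show "\<bar>g x - g y\<bar> \<le> L' * \<bar>x - y\<bar> powr \<delta>" .
qed

lemma holder_on_holder_norm:
  assumes g: "g \<in> holder_space \<delta>"
  shows "holder_on \<delta> (holder_norm \<delta> g) g"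
proof (rule holder_on_mono[OF holder_space_seminorm(2)[OF g]])
  show "Sup (holder_quots \<delta> g) \<le> holder_norm \<delta> g"
    using order_trans[OF abs_ge_zero abs_le_holder_sup[OF g, of 0]] by (simp add: holder_norm_def)
qed

lemma holder_space_diff:
  assumes u: "u \<in> holder_space \<delta>" and v: "v \<in> holder_space \<delta>"
  shows "(\<lambda>x. u x - v x) \<in> holder_space \<delta>"
proof -
  have "q \<le> holder_norm \<delta> u + holder_norm \<delta> v" if q: "q \<in> holder_quots \<delta> (\<lambda>x. u x - v x)" for q
  proof -
    obtain x y where xy: "x \<in> {0..1}" "y \<in> {0..1}" "x \<noteq> y"
      and q_eq: "q = \<bar>(u x - v x) - (u y - v y)\<bar> / \<bar>x - y\<bar> powr \<delta>"
      using q by (auto simp: holder_quots_def)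
    have "\<bar>u x - u y\<bar> \<le> holder_norm \<delta> u * \<bar>x - y\<bar> powr \<delta>"
      using holder_on_holder_norm[OF u] xy(1,2) unfolding holder_on_def by blast
    moreover have "\<bar>v x - v y\<bar> \<le> holder_norm \<delta> v * \<bar>x - y\<bar> powr \<delta>"
      using holder_on_holder_norm[OF v] xy(1,2) unfolding holder_on_def by blast
    ultimately have "\<bar>(u x - v x) - (u y - v y)\<bar> \<le> (holder_norm \<delta> u + holder_norm \<delta> v) * \<bar>x - y\<bar> powr \<delta>"
      unfolding distrib_right by linarith
    then show ?thesis
      unfolding q_eq using xy by (simp add: divide_le_eq)
  qed
  then have "bdd_above (holder_quots \<delta> (\<lambda>x. u x - v x))"
    by (rule bdd_aboveI)
  moreover have "continuous_on {0..1} (\<lambda>x. u x - v x)"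
    using u v by (intro continuous_intros) (auto simp: holder_space_def)
  ultimately show ?thesis
    unfolding holder_space_def mem_Collect_eq by (intro conjI)
qed

section \<open>Sobolev norms of derivatives of Hoelder functions\<close>

definition deriv_coeff :: "(real \<Rightarrow> real) \<Rightarrow> nat \<Rightarrow> real" where
  "deriv_coeff G k = - integral {0..1} (\<lambda>x. G x * eig_fun_deriv k x)"

lemma deriv_coeff_eq_cos_coeff: "deriv_coeff G k = - (sqrt 2 * (real k * pi)) * cos_coeff G k"
proof -
  have "(\<lambda>x. G x * eig_fun_deriv k x) = (\<lambda>x. (sqrt 2 * (real k * pi)) * (G x * cos_mode k x))"
    by (auto simp: eig_fun_deriv_def cos_mode_def)
  then show ?thesis
    by (simp add: deriv_coeff_def cos_coeff_def)
qed

lemma deriv_coeff_diff: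
  assumes "continuous_on {0..1} G\<^sub>1" "continuous_on {0..1} G\<^sub>2"
  shows "deriv_coeff G\<^sub>1 k - deriv_coeff G\<^sub>2 k = deriv_coeff (\<lambda>x. G\<^sub>1 x - G\<^sub>2 x) k"
proof -
  have "(\<lambda>x. G x * eig_fun_deriv k x) integrable_on {0..1}" if "continuous_on {0..1} G" for G
    unfolding eig_fun_deriv_def by (intro integrable_continuous_interval continuous_intros that)
  from integral_diff[OF this[OF assms(1)] this[OF assms(2)]] show ?thesis
    by (simp add: deriv_coeff_def left_diff_distrib)
qed

lemma H_terms_deriv_coeff:
  "H_terms \<gamma> (deriv_coeff G) k = 2 * ((real (Suc k) * pi) powr (2 + 2 * \<gamma>) * (cos_coeff G (Suc k))^2)"
proof -
  define X where "X = real (Suc k) * pi"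
  have X: "X > 0"
    by (simp add: X_def)
  have sq: "X^2 = X powr 2"
    using X by (simp add: powr_realpow)
  have "eig_val (Suc k) powr \<gamma> * X^2 = X powr (2 + 2 * \<gamma>)"
    unfolding eig_val_def X_def[symmetric] sq powr_powr powr_add[symmetric] by (simp add: add.commute)
  then show ?thesis
    unfolding H_terms_def deriv_coeff_eq_cos_coeff X_def[symmetric]
    by (simp add: power_mult_distrib)
qed

definition holder_embedding_const :: "real \<Rightarrow> real \<Rightarrow> real" where
  "holder_embedding_const \<gamma> \<delta> = sqrt (pi powr (2 + 2 * \<gamma>) / (1 - 2 powr (2 + 2 * \<gamma> - 2 * \<delta>)))"

lemma H_norm_deriv_coeff_le:
  assumes \<delta>: "0 < \<delta>" and \<gamma>: "-1 \<le> \<gamma>" "\<gamma> < \<delta> - 1"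
    and G: "continuous_on {0..1} G" and hol: "holder_on \<delta> L G" and L: "0 \<le> L"
  shows "summable (H_terms \<gamma> (deriv_coeff G))"
    and "H_norm \<gamma> (deriv_coeff G) \<le> holder_embedding_const \<gamma> \<delta> * L"
proof -
  define s where "s = 2 + 2 * \<gamma>"
  define c where "c = pi powr s / (1 - 2 powr (s - 2 * \<delta>))"
  have s: "0 \<le> s" "s < 2 * \<delta>"
    using \<gamma> by (auto simp: s_def)
  note weighted = weighted_cos_coeff_summable[OF G hol L \<delta> s]
  have terms: "H_terms \<gamma> (deriv_coeff G) = (\<lambda>k. 2 * ((real (Suc k) * pi) powr s * (cos_coeff G (Suc k))^2))"
    by (simp add: fun_eq_iff H_terms_deriv_coeff s_def)
  show "summable (H_terms \<gamma> (deriv_coeff G))"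
    unfolding terms by (intro summable_mult weighted(1))
  have "(\<Sum>k. (real (Suc k) * pi) powr s * (cos_coeff G (Suc k))^2) \<le> L^2 / 2 * c"
    using weighted(2) by (simp add: c_def)
  then have "(\<Sum>k. H_terms \<gamma> (deriv_coeff G) k) \<le> L^2 * c"
    unfolding terms suminf_mult[OF weighted(1)] by simp
  then have "H_norm \<gamma> (deriv_coeff G) \<le> sqrt (L^2 * c)"
    unfolding H_norm_def by (rule real_sqrt_le_mono)
  also have "sqrt (L^2 * c) = sqrt c * L"
    using L by (simp add: real_sqrt_mult)
  also have "sqrt c = holder_embedding_const \<gamma> \<delta>"
    unfolding holder_embedding_const_def c_def s_def ..
  finally show "H_norm \<gamma> (deriv_coeff G) \<le> holder_embedding_const \<gamma> \<delta> * L" .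
qed

lemma holder_embedding_const_pos:
  assumes "\<gamma> < \<delta> - 1"
  shows "0 < holder_embedding_const \<gamma> \<delta>"
proof -
  have "2 powr (2 + 2 * \<gamma> - 2 * \<delta>) < 2 powr 0"
    using assms by (intro powr_less_mono) auto
  then show ?thesis
    by (simp add: holder_embedding_const_def)
qed


section \<open>Estimates for smooth nonlinearities\<close>

lemma second_difference_le:
  fixes f f' :: "real \<Rightarrow> real"
  assumes f': "\<And>x. (f has_real_derivative f' x) (at x)"
    and M: "\<And>x. \<bar>x\<bar> \<le> 3 * R \<Longrightarrow> \<bar>f' x\<bar> \<le> M"
    and K: "\<And>x y. \<bar>x\<bar> \<le> 3 * R \<Longrightarrow> \<bar>y\<bar> \<le> 3 * R \<Longrightarrow> \<bar>f' x - f' y\<bar> \<le> K * \<bar>x - y\<bar>"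
    and ab: "\<bar>a\<bar> \<le> R" "\<bar>b\<bar> \<le> R" "\<bar>a'\<bar> \<le> R" "\<bar>b'\<bar> \<le> R"
  shows "\<bar>f a - f b - (f a' - f b')\<bar> \<le> M * \<bar>(a - b) - (a' - b')\<bar> + K * \<bar>a' - b'\<bar> * \<bar>b - b'\<bar>"
proof -
  txt \<open>Pass through \<open>b + d\<close>: what remains is a first difference of \<open>x \<mapsto> f (x + d) - f x\<close>,
    whose derivative is at most \<open>K |d|\<close>.\<close>
  define d where "d = a' - b'"
  have "norm (f a - f (b + d)) \<le> M * norm (a - (b + d))"
  proof (rule field_differentiable_bound[where S = "cball 0 (3 * R)" and f' = f'])
    show "(f has_real_derivative f' x) (at x within cball 0 (3 * R))" for x
      using f' by (rule has_field_derivative_at_within)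
  qed (use ab M in \<open>auto simp: d_def\<close>)
  moreover have "norm ((f (b + d) - f b) - (f (b' + d) - f b')) \<le> (K * \<bar>d\<bar>) * norm (b - b')"
  proof (rule field_differentiable_bound[where S = "cball 0 R" and f = "\<lambda>x. f (x + d) - f x"
        and f' = "\<lambda>x. f' (x + d) - f' x"])
    show "((\<lambda>x. f (x + d) - f x) has_real_derivative f' (x + d) - f' x) (at x within cball 0 R)" for x
      by (rule has_field_derivative_at_within) (auto intro!: derivative_eq_intros f'[THEN DERIV_chain2])
    show "norm (f' (x + d) - f' x) \<le> K * \<bar>d\<bar>" if "x \<in> cball 0 R" for x
      using that ab K[of "x + d" x] by (auto simp: d_def)
  qed (use ab in auto)
  moreover have "b' + d = a'"
    by (simp add: d_def)
  ultimately show ?thesis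
    unfolding d_def by (simp add: abs_mult algebra_simps)
qed
lemma poly_bounded_on_interval:
  fixes p :: "real poly"
  shows "\<exists>M\<ge>0. \<forall>x. \<bar>x\<bar> \<le> R \<longrightarrow> \<bar>poly p x\<bar> \<le> M"
proof -
  have "compact (poly p ` cball 0 R)"
    by (intro compact_continuous_image continuous_intros) auto
  then obtain M where "\<forall>y\<in>poly p ` cball 0 R. \<bar>y\<bar> \<le> M"
    using compact_imp_bounded bounded_real by blast
  then have "\<bar>poly p x\<bar> \<le> max M 0" if "\<bar>x\<bar> \<le> R" for x
    using that by (auto intro: max.coboundedI1)
  then show ?thesis
    by (intro exI[of _ "max M 0"]) auto
qed

lemma poly_lipschitz_on_interval:
  fixes p :: "real poly"
  shows "\<exists>K\<ge>0. \<forall>x y. \<bar>x\<bar> \<le> R \<longrightarrow> \<bar>y\<bar> \<le> R \<longrightarrow> \<bar>poly p x - poly p y\<bar> \<le> K * \<bar>x - y\<bar>"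
proof -
  obtain K where K: "K \<ge> 0" "\<And>x. \<bar>x\<bar> \<le> R \<Longrightarrow> \<bar>poly (pderiv p) x\<bar> \<le> K"
    using poly_bounded_on_interval[where p = "pderiv p" and R = R] by blast
  have "norm (poly p x - poly p y) \<le> K * norm (x - y)" if "\<bar>x\<bar> \<le> R" "\<bar>y\<bar> \<le> R" for x y
  proof (rule field_differentiable_bound[where S = "cball 0 R" and f' = "poly (pderiv p)"])
    show "(poly p has_real_derivative poly (pderiv p) z) (at z within cball 0 R)" for z
      by (rule has_field_derivative_at_within) (rule poly_DERIV)
  qed (use that K(2) in auto)
  with K(1) show ?thesis
    by auto
qed

section \<open>The nonlinearity \<open>F\<close>\<close>

lemma F_coef_eq_deriv_coeff: "F_coef p u = deriv_coeff (\<lambda>x. poly p (u x))"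
  by (simp add: fun_eq_iff F_coef_def deriv_coeff_def)

lemma summable_H_terms_F_coef:
  assumes \<delta>: "0 < \<delta>" and \<gamma>: "-1 \<le> \<gamma>" "\<gamma> < \<delta> - 1" and u: "u \<in> holder_space \<delta>"
  shows "summable (H_terms \<gamma> (F_coef p u))"
proof -
  define N where "N = holder_norm \<delta> u"
  obtain K where K: "K \<ge> 0" "\<And>a b. \<bar>a\<bar> \<le> N \<Longrightarrow> \<bar>b\<bar> \<le> N \<Longrightarrow> \<bar>poly p a - poly p b\<bar> \<le> K * \<bar>a - b\<bar>"
    using poly_lipschitz_on_interval[where p = p and R = N] by blast
  have hol: "holder_on \<delta> (K * N) (\<lambda>x. poly p (u x))"
    unfolding holder_on_def
  proof (intro ballI)
    fix x y :: real assume xy: "x \<in> {0..1}" "y \<in> {0..1}"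
    have "\<bar>poly p (u x) - poly p (u y)\<bar> \<le> K * \<bar>u x - u y\<bar>"
      using K(2) abs_le_holder_norm[OF u] xy by (simp add: N_def)
    also have "\<dots> \<le> K * (N * \<bar>x - y\<bar> powr \<delta>)"
      using holder_on_holder_norm[OF u] xy K(1) by (intro mult_left_mono) (auto simp: holder_on_def N_def)
    finally show "\<bar>poly p (u x) - poly p (u y)\<bar> \<le> K * N * \<bar>x - y\<bar> powr \<delta>"
      by (simp add: mult.assoc)
  qed
  have cont: "continuous_on {0..1} (\<lambda>x. poly p (u x))"
    using u by (intro continuous_intros) (simp add: holder_space_def)
  show ?thesis
    unfolding F_coef_eq_deriv_coeff
    using H_norm_deriv_coeff_le(1)[OF \<delta> \<gamma> cont hol] K(1) holder_norm_nonneg[OF u] by (simp add: N_def)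
qed

lemma H_norm_F_coef_diff_le:
  fixes p :: "real poly"
  assumes \<delta>: "0 < \<delta>" and \<gamma>: "-1 \<le> \<gamma>" "\<gamma> < \<delta> - 1"
    and u: "u \<in> holder_space \<delta>" "holder_norm \<delta> u \<le> R"
    and v: "v \<in> holder_space \<delta>" "holder_norm \<delta> v \<le> R"
    and M: "0 \<le> M" "\<And>x. \<bar>x\<bar> \<le> 3 * R \<Longrightarrow> \<bar>poly (pderiv p) x\<bar> \<le> M"
    and K: "0 \<le> K" "\<And>x y. \<bar>x\<bar> \<le> 3 * R \<Longrightarrow> \<bar>y\<bar> \<le> 3 * R \<Longrightarrow>
              \<bar>poly (pderiv p) x - poly (pderiv p) y\<bar> \<le> K * \<bar>x - y\<bar>"
  shows "H_norm \<gamma> (\<lambda>k. F_coef p u k - F_coef p v k)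
         \<le> holder_embedding_const \<gamma> \<delta> * (M + K * R) * holder_norm \<delta> (\<lambda>x. u x - v x)"
proof -
  define w where "w x = u x - v x" for x
  define G where "G x = poly p (u x) - poly p (v x)" for x
  have w: "w \<in> holder_space \<delta>"
    unfolding w_def using u(1) v(1) by (rule holder_space_diff)
  have R: "0 \<le> R"
    using holder_norm_nonneg[OF u(1)] u(2) by linarith
  have cont: "continuous_on {0..1} (\<lambda>x. poly p (u x))" "continuous_on {0..1} (\<lambda>x. poly p (v x))"
    using u(1) v(1) by (auto intro!: continuous_intros simp: holder_space_def)
  have hol: "holder_on \<delta> ((M + K * R) * holder_norm \<delta> w) G"
    unfolding holder_on_def
  proof (intro ballI)
    fix x y :: real assume xy: "x \<in> {0..1}" "y \<in> {0..1}"
    define d where "d = \<bar>x - y\<bar> powr \<delta>"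
    have bounds: "\<bar>u z\<bar> \<le> R" "\<bar>v z\<bar> \<le> R" if "z \<in> {0..1}" for z
      using abs_le_holder_norm[OF u(1) that] abs_le_holder_norm[OF v(1) that] u(2) v(2) by auto
    have N: "0 \<le> holder_norm \<delta> w"
      by (rule holder_norm_nonneg[OF w])
    have vd: "\<bar>v x - v y\<bar> \<le> R * d"
      using holder_on_holder_norm[OF v(1)] xy mult_right_mono[OF v(2), of d]
      by (force simp: holder_on_def d_def)
    have wd: "\<bar>w x - w y\<bar> \<le> holder_norm \<delta> w * d" and wy: "\<bar>w y\<bar> \<le> holder_norm \<delta> w"
      using holder_on_holder_norm[OF w] abs_le_holder_norm[OF w] xy by (auto simp: holder_on_def d_def)
    have "\<bar>G x - G y\<bar> \<le> M * \<bar>w x - w y\<bar> + K * \<bar>w y\<bar> * \<bar>v x - v y\<bar>"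
      unfolding G_def w_def
      by (rule second_difference_le[where f' = "poly (pderiv p)", OF poly_DERIV M(2) K(2)
            bounds[OF xy(1)] bounds[OF xy(2)]])
    also have "\<dots> \<le> M * (holder_norm \<delta> w * d) + K * holder_norm \<delta> w * (R * d)"
    proof (rule add_mono)
      show "M * \<bar>w x - w y\<bar> \<le> M * (holder_norm \<delta> w * d)"
        using wd M(1) by (rule mult_left_mono)
      show "K * \<bar>w y\<bar> * \<bar>v x - v y\<bar> \<le> K * holder_norm \<delta> w * (R * d)"
        using wy vd K(1) N by (intro mult_mono mult_left_mono) auto
    qed
    finally have "\<bar>G x - G y\<bar> \<le> M * (holder_norm \<delta> w * d) + K * holder_norm \<delta> w * (R * d)" .
    then show "\<bar>G x - G y\<bar> \<le> (M + K * R) * holder_norm \<delta> w * \<bar>x - y\<bar> powr \<delta>"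
      by (simp add: d_def algebra_simps)
  qed
  have "(\<lambda>k. F_coef p u k - F_coef p v k) = deriv_coeff G"
    unfolding F_coef_eq_deriv_coeff G_def using deriv_coeff_diff[OF cont] by auto
  moreover have "continuous_on {0..1} G"
    unfolding G_def by (intro continuous_intros cont)
  ultimately show ?thesis
    unfolding w_def[symmetric] mult.assoc
    using H_norm_deriv_coeff_le(2)[OF \<delta> \<gamma> _ hol] M(1) K(1) R holder_norm_nonneg[OF w] by simp
qed

lemma F_coef_lipschitz_on_holder_ball:
  fixes p :: "real poly"
  assumes \<delta>: "0 < \<delta>" and \<gamma>: "-1 \<le> \<gamma>" "\<gamma> < \<delta> - 1" and "R > 0"
  shows "\<exists>C>0. \<forall>u v. u \<in> holder_space \<delta> \<longrightarrow> v \<in> holder_space \<delta> \<longrightarrow>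
           holder_norm \<delta> u \<le> R \<longrightarrow> holder_norm \<delta> v \<le> R \<longrightarrow>
           H_norm \<gamma> (\<lambda>k. F_coef p u k - F_coef p v k) \<le> C * holder_norm \<delta> (\<lambda>x. u x - v x)"
proof -
  obtain M where M: "0 \<le> M" "\<And>x. \<bar>x\<bar> \<le> 3 * R \<Longrightarrow> \<bar>poly (pderiv p) x\<bar> \<le> M"
    using poly_bounded_on_interval[where p = "pderiv p" and R = "3 * R"] by blast
  obtain K where K: "0 \<le> K" "\<And>x y. \<bar>x\<bar> \<le> 3 * R \<Longrightarrow> \<bar>y\<bar> \<le> 3 * R \<Longrightarrow>
      \<bar>poly (pderiv p) x - poly (pderiv p) y\<bar> \<le> K * \<bar>x - y\<bar>"
    using poly_lipschitz_on_interval[where p = "pderiv p" and R = "3 * R"] by blast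
  define C where "C = holder_embedding_const \<gamma> \<delta> * (M + K * R) + 1"
  have "0 < C"
    using holder_embedding_const_pos[OF \<gamma>(2)] M(1) K(1) \<open>R > 0\<close> by (simp add: C_def add_nonneg_pos)
  moreover have "H_norm \<gamma> (\<lambda>k. F_coef p u k - F_coef p v k) \<le> C * holder_norm \<delta> (\<lambda>x. u x - v x)"
    if "u \<in> holder_space \<delta>" "v \<in> holder_space \<delta>" "holder_norm \<delta> u \<le> R" "holder_norm \<delta> v \<le> R" for u v
  proof -
    have "H_norm \<gamma> (\<lambda>k. F_coef p u k - F_coef p v k)
        \<le> holder_embedding_const \<gamma> \<delta> * (M + K * R) * holder_norm \<delta> (\<lambda>x. u x - v x)"
      by (rule H_norm_F_coef_diff_le[where M = M and K = K]) (use \<delta> \<gamma> that in \<open>auto intro: M K\<close>)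
    also have "\<dots> \<le> C * holder_norm \<delta> (\<lambda>x. u x - v x)"
      using holder_norm_nonneg[OF holder_space_diff[OF that(1,2)]]
      by (intro mult_right_mono) (auto simp: C_def)
    finally show ?thesis .
  qed
  ultimately show ?thesis
    by blast
qed

theorem mainTheorem9:
  fixes \<alpha> \<delta> :: real and p :: "real poly"
  assumes "1 < \<alpha>" "\<alpha> \<le> 2" "1 - \<alpha>/2 < \<delta>" "\<delta> < 1"
  shows "(\<forall>u \<in> holder_space \<delta>. summable (H_terms (-\<alpha>/2) (F_coef p u)))
       \<and> (\<forall>R>0. \<exists>C>0. \<forall>u v. u \<in> holder_space \<delta> \<longrightarrow> v \<in> holder_space \<delta> \<longrightarrow>
             holder_norm \<delta> u \<le> R \<longrightarrow> holder_norm \<delta> v \<le> R \<longrightarrow>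
             H_norm (-\<alpha>/2) (\<lambda>k. F_coef p u k - F_coef p v k) \<le> C * holder_norm \<delta> (\<lambda>x. u x - v x))"
proof (intro conjI ballI allI impI)
  have \<delta>: "0 < \<delta>" and \<gamma>: "-1 \<le> -\<alpha>/2" "-\<alpha>/2 < \<delta> - 1"
    using assms by auto
  show "summable (H_terms (-\<alpha>/2) (F_coef p u))" if "u \<in> holder_space \<delta>" for u
    using summable_H_terms_F_coef[OF \<delta> \<gamma> that] .
  show "\<exists>C>0. \<forall>u v. u \<in> holder_space \<delta> \<longrightarrow> v \<in> holder_space \<delta> \<longrightarrow>
      holder_norm \<delta> u \<le> R \<longrightarrow> holder_norm \<delta> v \<le> R \<longrightarrow>
      H_norm (-\<alpha>/2) (\<lambda>k. F_coef p u k - F_coef p v k) \<le> C * holder_norm \<delta> (\<lambda>x. u x - v x)"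
    if "R > 0" for R
    using F_coef_lipschitz_on_holder_ball[OF \<delta> \<gamma> that] .
qed

end
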